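(* Let $P,Q$ be probability measures on $\mathbb{R}^d$. For a probability measure $P$ define $\Lambda_P(v)=\log\int e^{v\cdot y}P(dy)\in(-\infty,\infty]$ and $I_P(x)=\sup_{v\in\mathbb{R}^d}\{v\cdot x-\Lambda_P(v)\}$ (and similarly $\Lambda_Q$, $I_Q$). Then for every $x\in\mathbb{R}^d$, $$\sup_{c>1}\Big\{\frac1cI_P(x)-\frac1{c-1}R_{c/(c-1)}(Q\|P)\Big\}\le I_Q(x)\le\inf_{0<c<1}\Big\{\frac1cI_P(x)+\frac1{1-c}R_{1/(1-c)}(P\|Q)\Big\},$$ with the convention $\infty-\infty=-\infty$ in the lower bound.
   Context: Rényi divergence: let $\nu$ be a $\sigma$-finite positive measure with $dP=p\,d\nu$, $dQ=q\,d\nu$. For $\alpha\in(0,1)$, $R_\alpha(Q\|P)=\frac{1}{\alpha(\alpha-1)}\log\int_{p>0}q^\alpha p^{1-\alpha}\,d\nu$; for $\alpha>1$, the same formula if $Q\ll P$ and $R_\alpha(Q\|P)=+\infty$ if $Q\not\ll P$. *)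

theory Defs
  imports "HOL-Probability.Probability"
begin

definition ln_ennreal :: "ennreal \<Rightarrow> ereal" where
  "ln_ennreal x = (if x = \<infinity> then \<infinity> else if x = 0 then -\<infinity> else ereal (ln (enn2real x)))"

definition logMGF :: "'a::euclidean_space measure \<Rightarrow> 'a \<Rightarrow> ereal" where
  "logMGF P v = ln_ennreal (\<integral>\<^sup>+ y. ennreal (exp (v \<bullet> y)) \<partial>P)"

definition rate_fun :: "'a::euclidean_space measure \<Rightarrow> 'a \<Rightarrow> ereal" where
  "rate_fun P x = (SUP v. ereal (v \<bullet> x) - logMGF P v)"

text \<open>Renyi divergence R_alpha(Q || P), where dP = p d\<nu> and dQ = q d\<nu>.
  For alpha in (0,1): 1/(alpha(alpha-1)) log of the integral over {p>0} of q^alpha p^(1-alpha) d\<nu>;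
  for alpha > 1: the same if Q << P, and +\<infinity> otherwise.
  (absolutely_continuous M N means N << M.)\<close>
definition renyi :: "real \<Rightarrow> 'a measure \<Rightarrow> ('a \<Rightarrow> real) \<Rightarrow> ('a \<Rightarrow> real) \<Rightarrow> ereal" where
  "renyi \<alpha> \<nu> q p =
     (if \<alpha> > 1 \<and> \<not> absolutely_continuous (density \<nu> (\<lambda>y. ennreal (p y))) (density \<nu> (\<lambda>y. ennreal (q y)))
      then \<infinity>
      else ereal (1 / (\<alpha> * (\<alpha> - 1))) *
           ln_ennreal (\<integral>\<^sup>+ y. ennreal (indicator {y. p y > 0} y * (q y powr \<alpha> * p y powr (1 - \<alpha>))) \<partial>\<nu>))"

definition minus_conv :: "ereal \<Rightarrow> ereal \<Rightarrow> ereal" where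
  "minus_conv a b = (if a = \<infinity> \<and> b = \<infinity> then -\<infinity> else a - b)"

end

theory Submission
  imports Defs
begin

text \<open>
  For 0 < c < 1 and \<alpha> = 1/(1-c), write e^{c v\<cdot>y} p = (e^{v\<cdot>y} q)^c (p^\<alpha> q^{1-\<alpha>})^{1-c} on {q > 0}
  (P \<ll> Q makes p vanish on {q = 0}). H\<ouml>lder's inequality with exponents 1/c and 1/(1-c) then gives
  \<Lambda>_P(c v) \<le> c \<Lambda>_Q(v) + c/(1-c) R_\<alpha>(P\<parallel>Q), and taking the Legendre transform in v yields the
  upper bound for I_Q. The lower bound is the same inequality with P and Q exchanged and c
  replaced by 1/c, solved for I_Q.
\<close>

lemma ln_ennreal_eq_ereal_iff: "ln_ennreal X = ereal a \<longleftrightarrow> X = ennreal (exp a)"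
  by (cases X) (auto simp: ln_ennreal_def)

lemma ln_ennreal_le_ereal:
  assumes "X \<le> ennreal (exp a)"
  shows "ln_ennreal X \<le> ereal a"
proof (cases X rule: ennreal_cases)
  case (real r)
  with assms have "r \<le> exp a" by (simp add: ennreal_le_iff)
  with real show ?thesis
    using ln_mono[of r "exp a"] by (auto simp: ln_ennreal_def)
qed (use assms in \<open>auto simp: top_unique\<close>)

lemma powr_mult_powr_le_convex_comb:
  fixes a b c :: real
  assumes "0 \<le> a" "0 \<le> b" "0 < c" "c < 1"
  shows "a powr c * b powr (1 - c) \<le> c * a + (1 - c) * b"
proof (cases "a = 0 \<or> b = 0")
  case False
  with assms show ?thesis by (intro Youngs_inequality_0) auto
qed (use assms in auto)

lemma nn_integral_powr_mult_le:
  fixes f g :: "'a \<Rightarrow> real"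
  assumes [measurable]: "f \<in> borel_measurable M" "g \<in> borel_measurable M"
    and f_nonneg: "\<And>y. 0 \<le> f y" and g_nonneg: "\<And>y. 0 \<le> g y"
    and c: "0 < c" "c < 1"
    and A: "(\<integral>\<^sup>+y. ennreal (f y) \<partial>M) = ennreal A" "0 \<le> A"
    and B: "(\<integral>\<^sup>+y. ennreal (g y) \<partial>M) = ennreal B" "0 \<le> B"
  shows "(\<integral>\<^sup>+y. ennreal (f y powr c * g y powr (1 - c)) \<partial>M) \<le> ennreal (A powr c * B powr (1 - c))"
proof (cases "A = 0 \<or> B = 0")
  case True
  have "AE y in M. f y powr c * g y powr (1 - c) = 0"
  proof (cases "A = 0")
    case True
    with A have "AE y in M. ennreal (f y) = 0" by (simp add: nn_integral_0_iff_AE)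
    then show ?thesis by eventually_elim (use f_nonneg in auto)
  next
    case False
    with \<open>A = 0 \<or> B = 0\<close> B have "AE y in M. ennreal (g y) = 0" by (simp add: nn_integral_0_iff_AE)
    then show ?thesis by eventually_elim (use g_nonneg c in auto)
  qed
  then have "(\<integral>\<^sup>+y. ennreal (f y powr c * g y powr (1 - c)) \<partial>M) = 0"
    by (simp add: nn_integral_0_iff_AE)
  then show ?thesis by simp
next
  case False
  with A B have A_pos: "0 < A" and B_pos: "0 < B" by auto
  define K where "K = A powr c * B powr (1 - c)"
  text \<open>Weighted AM-GM applied to f/A and g/B, scaled back by K.\<close>
  have pointwise: "f y powr c * g y powr (1 - c) \<le> (K * c / A) * f y + (K * (1 - c) / B) * g y" for y
  proof -
    have "K * ((f y / A) powr c * (g y / B) powr (1 - c)) \<le> K * (c * (f y / A) + (1 - c) * (g y / B))"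
      using A_pos B_pos c f_nonneg g_nonneg
      by (intro mult_left_mono powr_mult_powr_le_convex_comb) (auto simp: K_def)
    then show ?thesis
      using A_pos B_pos by (simp add: K_def powr_divide field_simps)
  qed
  have "(\<integral>\<^sup>+y. ennreal (f y powr c * g y powr (1 - c)) \<partial>M)
      \<le> (\<integral>\<^sup>+y. ennreal (K * c / A) * ennreal (f y) + ennreal (K * (1 - c) / B) * ennreal (g y) \<partial>M)"
    using pointwise A_pos B_pos c f_nonneg g_nonneg
    by (intro nn_integral_mono)
       (simp add: K_def ennreal_mult'[symmetric] ennreal_plus[symmetric] ennreal_leI del: ennreal_plus)
  also have "\<dots> = ennreal (K * c / A) * ennreal A + ennreal (K * (1 - c) / B) * ennreal B"
    by (simp add: nn_integral_add nn_integral_cmult A B)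
  also have "\<dots> = ennreal K"
    using A_pos B_pos c
    by (simp add: K_def ennreal_mult'[symmetric] ennreal_plus[symmetric] field_simps del: ennreal_plus)
  finally show ?thesis by (simp add: K_def)
qed

lemma powr_holder_split:
  fixes a p q c :: real
  assumes "0 < a" "0 \<le> p" "0 < q" "0 < c" "c < 1"
  shows "(a * q) powr c * (p powr (1 / (1 - c)) * q powr (1 - 1 / (1 - c))) powr (1 - c) = p * a powr c"
proof -
  have "1 / (1 - c) * (1 - c) = 1" "(1 - 1 / (1 - c)) * (1 - c) = - c"
    using assms by (auto simp: field_simps)
  then have "(p powr (1 / (1 - c)) * q powr (1 - 1 / (1 - c))) powr (1 - c) = p * q powr (- c)"
    using assms by (simp add: powr_mult powr_powr)
  moreover have "q powr c * q powr (- c) = 1"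
    using assms by (simp flip: powr_add)
  ultimately show ?thesis
    using assms by (simp add: powr_mult algebra_simps)
qed

lemma AE_density_zero_if_absolutely_continuous:
  assumes [measurable]: "p \<in> borel_measurable \<nu>" "q \<in> borel_measurable \<nu>"
    and p_nonneg: "\<And>y. 0 \<le> p y"
    and "absolutely_continuous (density \<nu> (\<lambda>y. ennreal (q y))) (density \<nu> (\<lambda>y. ennreal (p y)))"
  shows "AE y in \<nu>. q y = 0 \<longrightarrow> p y = 0"
proof -
  have "{y\<in>space \<nu>. q y = 0} \<in> null_sets (density \<nu> (\<lambda>y. ennreal (q y)))"
    by (subst null_sets_density_iff) auto
  with assms(4) have "{y\<in>space \<nu>. q y = 0} \<in> null_sets (density \<nu> (\<lambda>y. ennreal (p y)))"
    unfolding absolutely_continuous_def by blast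
  then have "AE y in \<nu>. y \<in> {y\<in>space \<nu>. q y = 0} \<longrightarrow> ennreal (p y) = 0"
    by (subst (asm) null_sets_density_iff) auto
  with AE_space show ?thesis
    by eventually_elim (use p_nonneg in auto)
qed

lemma nn_integral_exp_scaleR_le_holder:
  fixes \<nu> :: "'a::euclidean_space measure" and p q :: "'a \<Rightarrow> real"
  assumes sets_\<nu>: "sets \<nu> = sets borel"
    and [measurable]: "p \<in> borel_measurable \<nu>" "q \<in> borel_measurable \<nu>"
    and p_nonneg: "\<And>y. 0 \<le> p y" and q_nonneg: "\<And>y. 0 \<le> q y"
    and supp: "AE y in \<nu>. q y = 0 \<longrightarrow> p y = 0"
    and c: "0 < c" "c < 1"
    and A: "(\<integral>\<^sup>+y. ennreal (exp (v \<bullet> y) * q y) \<partial>\<nu>) = ennreal A" "0 \<le> A"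
    and B: "(\<integral>\<^sup>+y. ennreal (indicator {y. 0 < q y} y * (p y powr (1 / (1 - c)) * q y powr (1 - 1 / (1 - c)))) \<partial>\<nu>) = ennreal B" "0 \<le> B"
  shows "(\<integral>\<^sup>+y. ennreal (p y * exp ((c *\<^sub>R v) \<bullet> y)) \<partial>\<nu>) \<le> ennreal (A powr c * B powr (1 - c))"
proof -
  have [measurable]: "(\<lambda>y. w \<bullet> y) \<in> borel_measurable \<nu>" for w :: 'a
    unfolding measurable_cong_sets[OF sets_\<nu> refl] by simp
  define f where "f y = exp (v \<bullet> y) * q y" for y
  define g where "g y = indicator {y. 0 < q y} y * (p y powr (1 / (1 - c)) * q y powr (1 - 1 / (1 - c)))" for y
  have [measurable]: "f \<in> borel_measurable \<nu>" "g \<in> borel_measurable \<nu>"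
    unfolding f_def g_def by measurable
  have "(\<integral>\<^sup>+y. ennreal (p y * exp ((c *\<^sub>R v) \<bullet> y)) \<partial>\<nu>) \<le> (\<integral>\<^sup>+y. ennreal (f y powr c * g y powr (1 - c)) \<partial>\<nu>)"
    using supp
  proof (intro nn_integral_mono_AE, eventually_elim)
    case (elim y)
    show ?case
    proof (cases "0 < q y")
      case True
      then show ?thesis
        using c p_nonneg powr_holder_split[of "exp (v \<bullet> y)" "p y" "q y" c]
        by (simp add: f_def g_def powr_def[of "exp _"] algebra_simps)
    next
      case False
      with q_nonneg[of y] elim show ?thesis by simp
    qed
  qed
  also have "\<dots> \<le> ennreal (A powr c * B powr (1 - c))"
    using A B c p_nonneg q_nonneg
    by (intro nn_integral_powr_mult_le) (auto simp: f_def g_def)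
  finally show ?thesis .
qed

lemma logMGF_scaleR_le_renyi:
  fixes P Q \<nu> :: "'a::euclidean_space measure" and p q :: "'a \<Rightarrow> real"
  assumes sets_\<nu>: "sets \<nu> = sets borel"
    and [measurable]: "p \<in> borel_measurable \<nu>" "q \<in> borel_measurable \<nu>"
    and p_nonneg: "\<And>y. 0 \<le> p y" and q_nonneg: "\<And>y. 0 \<le> q y"
    and P: "P = density \<nu> (\<lambda>y. ennreal (p y))" and Q: "Q = density \<nu> (\<lambda>y. ennreal (q y))"
    and c: "0 < c" "c < 1"
    and logMGF_Q: "logMGF Q v = ereal a"
    and renyi_PQ: "renyi (1 / (1 - c)) \<nu> p q = ereal r"
  shows "logMGF P (c *\<^sub>R v) \<le> ereal (c * a + c / (1 - c) * r)"
proof -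
  have [measurable]: "(\<lambda>y. w \<bullet> y) \<in> borel_measurable \<nu>" for w :: 'a
    unfolding measurable_cong_sets[OF sets_\<nu> refl] by simp
  define \<alpha> where "\<alpha> = 1 / (1 - c)"
  define b where "b = \<alpha> * (\<alpha> - 1) * r"
  have \<alpha>_minus_1: "\<alpha> - 1 = c / (1 - c)"
    using c by (simp add: \<alpha>_def field_simps)
  have \<alpha>_gt_1: "1 < \<alpha>" and b_scaled: "(1 - c) * b = c / (1 - c) * r"
    using c \<alpha>_minus_1 by (simp_all add: b_def \<alpha>_def)
  define IB where "IB = (\<integral>\<^sup>+y. ennreal (indicator {y. 0 < q y} y * (p y powr \<alpha> * q y powr (1 - \<alpha>))) \<partial>\<nu>)"
  have ac: "absolutely_continuous Q P" and "ereal (1 / (\<alpha> * (\<alpha> - 1))) * ln_ennreal IB = ereal r"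
    using renyi_PQ \<alpha>_gt_1 by (auto simp: renyi_def P Q \<alpha>_def IB_def split: if_splits)
  then have "ln_ennreal IB = ereal b"
    using \<alpha>_gt_1 by (cases "ln_ennreal IB") (auto simp: b_def)
  then have B: "IB = ennreal (exp b)"
    by (simp add: ln_ennreal_eq_ereal_iff)
  have supp: "AE y in \<nu>. q y = 0 \<longrightarrow> p y = 0"
    using ac p_nonneg by (intro AE_density_zero_if_absolutely_continuous) (auto simp: P Q)
  have "(\<integral>\<^sup>+y. ennreal (exp (v \<bullet> y) * q y) \<partial>\<nu>) = (\<integral>\<^sup>+y. ennreal (exp (v \<bullet> y)) \<partial>Q)"
    using q_nonneg by (simp add: Q nn_integral_density ennreal_mult' mult.commute)
  also have "\<dots> = ennreal (exp a)"
    using logMGF_Q by (simp add: logMGF_def ln_ennreal_eq_ereal_iff)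
  finally have A: "(\<integral>\<^sup>+y. ennreal (exp (v \<bullet> y) * q y) \<partial>\<nu>) = ennreal (exp a)" .
  have "(\<integral>\<^sup>+y. ennreal (exp ((c *\<^sub>R v) \<bullet> y)) \<partial>P) = (\<integral>\<^sup>+y. ennreal (p y * exp ((c *\<^sub>R v) \<bullet> y)) \<partial>\<nu>)"
    using p_nonneg by (simp add: P nn_integral_density ennreal_mult')
  also have "\<dots> \<le> ennreal (exp a powr c * exp b powr (1 - c))"
    using A B c p_nonneg q_nonneg supp
    by (intro nn_integral_exp_scaleR_le_holder[OF sets_\<nu>]) (auto simp: IB_def \<alpha>_def)
  also have "exp a powr c * exp b powr (1 - c) = exp (c * a + c / (1 - c) * r)"
    using b_scaled by (simp add: powr_def exp_add mult.commute)
  finally show ?thesis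
    unfolding logMGF_def by (rule ln_ennreal_le_ereal)
qed

lemma logMGF_neq_minf:
  fixes P :: "'a::euclidean_space measure"
  assumes "prob_space P" and sets_P: "sets P = sets borel"
  shows "logMGF P v \<noteq> -\<infinity>"
proof
  assume "logMGF P v = -\<infinity>"
  then have "(\<integral>\<^sup>+y. ennreal (exp (v \<bullet> y)) \<partial>P) = 0"
    by (auto simp: logMGF_def ln_ennreal_def split: if_splits)
  moreover have "(\<lambda>y. exp (v \<bullet> y)) \<in> borel_measurable P"
    unfolding measurable_cong_sets[OF sets_P refl] by measurable
  ultimately have "AE y in P. False"
    by (subst (asm) nn_integral_0_iff_AE) auto
  with assms show False
    by (simp add: prob_space.AE_False)
qed

lemma renyi_neq_minf:
  assumes "prob_space (density \<nu> (\<lambda>y. ennreal (p y)))"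
    and [measurable]: "p \<in> borel_measurable \<nu>" "q \<in> borel_measurable \<nu>"
    and p_nonneg: "\<And>y. 0 \<le> p y" and q_nonneg: "\<And>y. 0 \<le> q y"
    and "1 < \<alpha>"
  shows "renyi \<alpha> \<nu> p q \<noteq> -\<infinity>"
proof
  define IB where "IB = (\<integral>\<^sup>+y. ennreal (indicator {y. 0 < q y} y * (p y powr \<alpha> * q y powr (1 - \<alpha>))) \<partial>\<nu>)"
  assume "renyi \<alpha> \<nu> p q = -\<infinity>"
  then have ac: "absolutely_continuous (density \<nu> (\<lambda>y. ennreal (q y))) (density \<nu> (\<lambda>y. ennreal (p y)))"
    and "ereal (1 / (\<alpha> * (\<alpha> - 1))) * ln_ennreal IB = -\<infinity>"
    using \<open>1 < \<alpha>\<close> by (auto simp: renyi_def IB_def split: if_splits)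
  moreover have "0 < 1 / (\<alpha> * (\<alpha> - 1))"
    using \<open>1 < \<alpha>\<close> by simp
  ultimately have "IB = 0"
    by (auto simp: ln_ennreal_def split: if_splits)
  then have "AE y in \<nu>. 0 < q y \<longrightarrow> p y = 0"
    unfolding IB_def by (subst (asm) nn_integral_0_iff_AE) (auto elim!: eventually_mono simp: indicator_def)
  moreover have "AE y in \<nu>. q y = 0 \<longrightarrow> p y = 0"
    using ac p_nonneg by (intro AE_density_zero_if_absolutely_continuous) simp_all
  ultimately have "AE y in \<nu>. ennreal (p y) = 0"
    by eventually_elim (use q_nonneg in \<open>auto simp: less_eq_real_def\<close>)
  then have "emeasure (density \<nu> (\<lambda>y. ennreal (p y))) (space \<nu>) = 0"
    by (simp add: emeasure_density nn_integral_0_iff_AE)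
  with assms(1) show False
    using prob_space.emeasure_space_1 by fastforce
qed

lemma rate_fun_ge: "ereal (v \<bullet> x) - logMGF P v \<le> rate_fun P x"
  unfolding rate_fun_def by (rule SUP_upper) simp

lemma rate_fun_nonneg:
  assumes "prob_space P"
  shows "0 \<le> rate_fun P x"
  using rate_fun_ge[of 0 x P] prob_space.emeasure_space_1[OF assms]
  by (simp add: logMGF_def ln_ennreal_def)

lemma rate_fun_le_renyi:
  fixes P Q \<nu> :: "'a::euclidean_space measure" and p q :: "'a \<Rightarrow> real"
  assumes "prob_space P" "prob_space Q" "sets Q = sets borel" "sets \<nu> = sets borel"
    and [measurable]: "p \<in> borel_measurable \<nu>" "q \<in> borel_measurable \<nu>"
    and p_nonneg: "\<And>y. 0 \<le> p y" and q_nonneg: "\<And>y. 0 \<le> q y"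
    and P: "P = density \<nu> (\<lambda>y. ennreal (p y))" and Q: "Q = density \<nu> (\<lambda>y. ennreal (q y))"
    and c: "0 < c" "c < 1"
  shows "rate_fun Q x \<le> ereal (1 / c) * rate_fun P x + ereal (1 / (1 - c)) * renyi (1 / (1 - c)) \<nu> p q"
  unfolding rate_fun_def[of Q]
proof (rule SUP_least)
  fix v :: 'a
  show "ereal (v \<bullet> x) - logMGF Q v \<le> ereal (1 / c) * rate_fun P x + ereal (1 / (1 - c)) * renyi (1 / (1 - c)) \<nu> p q"
  proof (cases "logMGF Q v = \<infinity> \<or> renyi (1 / (1 - c)) \<nu> p q = \<infinity>")
    case False
    moreover have "logMGF Q v \<noteq> -\<infinity>"
      using assms(2,3) by (rule logMGF_neq_minf)
    moreover have "renyi (1 / (1 - c)) \<nu> p q \<noteq> -\<infinity>"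
      using assms(1) c p_nonneg q_nonneg unfolding P by (intro renyi_neq_minf) auto
    ultimately obtain a r where a: "logMGF Q v = ereal a" and r: "renyi (1 / (1 - c)) \<nu> p q = ereal r"
      by (metis ereal_cases)
    have "ereal (c * (v \<bullet> x) - (c * a + c / (1 - c) * r))
        = ereal ((c *\<^sub>R v) \<bullet> x) - ereal (c * a + c / (1 - c) * r)"
      by simp
    also have "\<dots> \<le> ereal ((c *\<^sub>R v) \<bullet> x) - logMGF P (c *\<^sub>R v)"
      using logMGF_scaleR_le_renyi[OF assms(4-10) c a r] by (intro ereal_minus_mono) auto
    also have "\<dots> \<le> rate_fun P x"
      by (rule rate_fun_ge)
    finally have "ereal (1 / c) * ereal (c * (v \<bullet> x) - (c * a + c / (1 - c) * r))
        \<le> ereal (1 / c) * rate_fun P x"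
      using c by (intro ereal_mult_left_mono) auto
    moreover have "1 / c * (c * (v \<bullet> x) - (c * a + c / (1 - c) * r)) = v \<bullet> x - a - r / (1 - c)"
      using c by (simp add: field_simps)
    ultimately have "ereal (v \<bullet> x - a - r / (1 - c)) \<le> ereal (1 / c) * rate_fun P x"
      by simp
    then have "ereal (v \<bullet> x - a - r / (1 - c)) + ereal (r / (1 - c))
        \<le> ereal (1 / c) * rate_fun P x + ereal (r / (1 - c))"
      by (rule add_right_mono)
    then show ?thesis
      using a r by simp
  qed (use c in auto)
qed

lemma minus_conv_le_of_le_scaled:
  fixes IP IQ R :: ereal and c :: real
  assumes c: "1 < c" and "0 \<le> IP" and "IP \<le> ereal c * IQ + ereal (c / (c - 1)) * R"
  shows "minus_conv (ereal (1 / c) * IP) (ereal (1 / (c - 1)) * R) \<le> IQ"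
proof (cases IP; cases IQ; cases R)
  fix a b d assume *: "IP = ereal a" "IQ = ereal b" "R = ereal d"
  with assms(3) have "a \<le> c * b + c / (c - 1) * d" by simp
  with c have "a / c - d / (c - 1) \<le> b" by (simp add: field_simps)
  with * show ?thesis by (simp add: minus_conv_def)
qed (use assms in \<open>auto simp: minus_conv_def\<close>)

theorem mainTheorem15:
  fixes P Q \<nu> :: "'a::euclidean_space measure"
    and p q :: "'a \<Rightarrow> real"
    and x :: 'a
  assumes "prob_space P" and "prob_space Q"
    and "sets P = sets borel" and "sets Q = sets borel"
    and "sigma_finite_measure \<nu>" and "sets \<nu> = sets borel"
    and "p \<in> borel_measurable \<nu>" and "q \<in> borel_measurable \<nu>"
    and "\<And>y. p y \<ge> 0" and "\<And>y. q y \<ge> 0"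
    and "P = density \<nu> (\<lambda>y. ennreal (p y))"
    and "Q = density \<nu> (\<lambda>y. ennreal (q y))"
  shows "(SUP c\<in>{1<..}. minus_conv (ereal (1 / c) * rate_fun P x)
                                  (ereal (1 / (c - 1)) * renyi (c / (c - 1)) \<nu> q p))
           \<le> rate_fun Q x \<and> rate_fun Q x
           \<le> (INF c\<in>{0<..<1}. ereal (1 / c) * rate_fun P x
                                + ereal (1 / (1 - c)) * renyi (1 / (1 - c)) \<nu> p q)"
proof
  show "(SUP c\<in>{1<..}. minus_conv (ereal (1 / c) * rate_fun P x)
                                  (ereal (1 / (c - 1)) * renyi (c / (c - 1)) \<nu> q p)) \<le> rate_fun Q x"
  proof (rule SUP_least)
    fix c :: real
    assume "c \<in> {1<..}"
    then have c: "1 < c" and "1 / (1 - 1 / c) = c / (c - 1)"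
      by (auto simp: field_simps)
    with rate_fun_le_renyi[OF assms(2,1,3,6,8,7,10,9,12,11), of "1 / c" x]
    have "rate_fun P x \<le> ereal c * rate_fun Q x + ereal (c / (c - 1)) * renyi (c / (c - 1)) \<nu> q p"
      by simp
    with c rate_fun_nonneg[OF assms(1)]
    show "minus_conv (ereal (1 / c) * rate_fun P x) (ereal (1 / (c - 1)) * renyi (c / (c - 1)) \<nu> q p)
        \<le> rate_fun Q x"
      by (rule minus_conv_le_of_le_scaled)
  qed
  show "rate_fun Q x \<le> (INF c\<in>{0<..<1}. ereal (1 / c) * rate_fun P x
                                + ereal (1 / (1 - c)) * renyi (1 / (1 - c)) \<nu> p q)"
    using rate_fun_le_renyi[OF assms(1,2,4,6-12)] by (intro INF_greatest) simp
qed

end
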